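(* Let $\mathfrak{R}$ be either $\mathbb{F}_q$ ($q$ a prime power) or $\mathbb{Z}_k$ ($k\ge2$), with elements listed as $0=\omega_0,\omega_1,\dots,\omega_{|\mathfrak{R}|-1}$. Let $C$ and $D$ be $\mathfrak{R}$-linear codes of length $n$ and $\bm{w}\in\mathfrak{R}^n$. Then \[ \mathfrak{Jac}^{av}(C,D,\bm{w};x_c:c\in\mathfrak{R}^3) =\sum_{L,R,H}A_L^C\,B_R^{D,\bm{w}}\, \frac{\prod_{a=(a_1,a_2)\in\mathfrak{R}^2}\binom{R_a}{H_{(\omega_0,a_1,a_2)},\ldots,H_{(\omega_{|\mathfrak{R}|-1},a_1,a_2)}}}{\binom{n}{L_{\omega_0},\ldots,L_{\omega_{|\mathfrak{R}|-1}}}} \prod_{c\in\mathfrak{R}^3}x_c^{H_c}, \] where the sum runs over compositions $L$ of $n$, Jacobi compositions $R$ of $n$ and joint Jacobi compositions $H$ of $n$ such that $L_b=\sum_{(a_1,a_2)\in\mathfrak{R}^2}H_{(b,a_1,a_2)}$ for all $b\in\mathfrak{R}$ and $R_{(a_1,a_2)}=\sum_{b\in\mathfrak{R}}H_{(b,a_1,a_2)}$ for all $(a_1,a_2)\in\mathfrak{R}^2$.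
   Context: An $\mathbb{F}_q$-linear code of length $n$ is a subspace of $\mathbb{F}_q^n$; a $\mathbb{Z}_k$-linear code is an additive subgroup of $\mathbb{Z}_k^n$. For $\bm{u}\in\mathfrak{R}^n$, $\ell_a(\bm{u})=\#\{i:u_i=a\}$ ($a\in\mathfrak{R}$); for $\bm{u},\bm{w}$, $r_a(\bm{u};\bm{w})=\#\{i:(u_i,w_i)=a\}$ ($a\in\mathfrak{R}^2$); for $\bm{u},\bm{v},\bm{w}$, $h_a(\bm{u},\bm{v};\bm{w})=\#\{i:(u_i,v_i,w_i)=a\}$ ($a\in\mathfrak{R}^3$). A composition (resp. Jacobi composition, joint Jacobi composition) of $n$ is a vector of non-negative integers indexed by $\mathfrak{R}$ (resp. $\mathfrak{R}^2$, $\mathfrak{R}^3$) with entries summing to $n$. $A_L^C=\#\{\bm{u}\in C:\ell_a(\bm{u})=L_a\ \forall a\in\mathfrak{R}\}$ and $B_R^{D,\bm{w}}=\#\{\bm{v}\in D: r_a(\bm{v};\bm{w})=R_a\ \forall a\in\mathfrak{R}^2\}$. The complete joint Jacobi polynomial is $\mathfrak{Jac}(C,D,\bm{w};x_c:c\in\mathfrak{R}^3)=\sum_{\bm{u}\in C,\bm{v}\in D}\prod_{c\in\mathfrak{R}^3}x_c^{h_c(\bm{u},\bm{v};\bm{w})}$. For $\sigma\in S_n$, $\bm{u}^\sigma=(u_{\sigma(1)},\dots,u_{\sigma(n)})$, $C^\sigma=\{\bm{u}^\sigma:\bm{u}\in C\}$, and $\mathfrak{Jac}^{av}(C,D,\bm{w};x_c:c\in\mathfrak{R}^3)=\frac{1}{n!}\sum_{\sigma\in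 S_n}\mathfrak{Jac}(C^\sigma,D,\bm{w};x_c:c\in\mathfrak{R}^3)$. Multinomial coefficients: $\binom{m}{m_1,\dots,m_k}=\frac{m!}{m_1!\cdots m_k!}$. *)

theory Defs
  imports Complex_Main "HOL-Combinatorics.Permutations"
begin

text \<open>The alphabet is a finite commutative ring which is either a finite field
  (this is F_q) or a ring whose every element is a multiple of 1 and which has at
  least two elements (this is, up to isomorphism, Z_k with k = card, k >= 2).\<close>
definition Fq_or_Zk :: "'r::{finite,comm_ring_1} itself \<Rightarrow> bool" where
  "Fq_or_Zk _ \<longleftrightarrow>
     ((0::'r) \<noteq> 1 \<and> (\<forall>x::'r. x \<noteq> 0 \<longrightarrow> (\<exists>y. x * y = 1)))
   \<or> (card (UNIV::'r set) \<ge> 2 \<and> (\<forall>x::'r. \<exists>m::nat. x = of_nat m))"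

definition words :: "nat \<Rightarrow> 'r list set" where
  "words n = {u. length u = n}"

definition linear_code :: "nat \<Rightarrow> 'r::comm_ring_1 list set \<Rightarrow> bool" where
  "linear_code n C \<longleftrightarrow> C \<subseteq> words n \<and> replicate n 0 \<in> C
     \<and> (\<forall>u\<in>C. \<forall>v\<in>C. map2 (+) u v \<in> C)
     \<and> (\<forall>a. \<forall>u\<in>C. map (\<lambda>x. a * x) u \<in> C)"

definition ell :: "nat \<Rightarrow> 'r \<Rightarrow> 'r list \<Rightarrow> nat" where
  "ell n a u = card {i. i < n \<and> u ! i = a}"

definition rr :: "nat \<Rightarrow> 'r \<times> 'r \<Rightarrow> 'r list \<Rightarrow> 'r list \<Rightarrow> nat" where
  "rr n a u w = card {i. i < n \<and> (u ! i, w ! i) = a}"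

definition hh :: "nat \<Rightarrow> 'r \<times> 'r \<times> 'r \<Rightarrow> 'r list \<Rightarrow> 'r list \<Rightarrow> 'r list \<Rightarrow> nat" where
  "hh n a u v w = card {i. i < n \<and> (u ! i, v ! i, w ! i) = a}"

definition composition :: "nat \<Rightarrow> ('a::finite \<Rightarrow> nat) \<Rightarrow> bool" where
  "composition n L \<longleftrightarrow> (\<Sum>a\<in>UNIV. L a) = n"

definition A_count :: "nat \<Rightarrow> 'r::finite list set \<Rightarrow> ('r \<Rightarrow> nat) \<Rightarrow> nat" where
  "A_count n C L = card {u\<in>C. \<forall>a. ell n a u = L a}"

definition B_count :: "nat \<Rightarrow> 'r::finite list set \<Rightarrow> 'r list \<Rightarrow> ('r \<times> 'r \<Rightarrow> nat) \<Rightarrow> nat" where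
  "B_count n D w R = card {v\<in>D. \<forall>a. rr n a v w = R a}"

definition Jac :: "nat \<Rightarrow> 'r::finite list set \<Rightarrow> 'r list set \<Rightarrow> 'r list
    \<Rightarrow> ('r \<times> 'r \<times> 'r \<Rightarrow> real) \<Rightarrow> real" where
  "Jac n C D w x = (\<Sum>u\<in>C. \<Sum>v\<in>D. \<Prod>c\<in>UNIV. x c ^ hh n c u v w)"

definition permute_word :: "nat \<Rightarrow> (nat \<Rightarrow> nat) \<Rightarrow> 'r list \<Rightarrow> 'r list" where
  "permute_word n \<sigma> u = map (\<lambda>i. u ! \<sigma> i) [0..<n]"

definition Jac_av :: "nat \<Rightarrow> 'r::finite list set \<Rightarrow> 'r list set \<Rightarrow> 'r list
    \<Rightarrow> ('r \<times> 'r \<times> 'r \<Rightarrow> real) \<Rightarrow> real" where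
  "Jac_av n C D w x = (1 / fact n) *
     (\<Sum>\<sigma>\<in>{\<sigma>. \<sigma> permutes {..<n}}. Jac n (permute_word n \<sigma> ` C) D w x)"

definition multinom :: "nat \<Rightarrow> ('b \<Rightarrow> nat) \<Rightarrow> 'b set \<Rightarrow> real" where
  "multinom m k S = fact m / (\<Prod>b\<in>S. fact (k b))"

end

theory Submission
  imports Defs "HOL-Combinatorics.Multiset_Permutations"
begin

(* Averaging over S_n replaces a codeword u by the uniform distribution on its rearrangements,
   i.e. on the multinom(n; l(u)) words with the same composition l(u).  Among these, the number of
   u' whose joint composition with (v, w) is H equals prod_a multinom(R_a; H(., a)): on the R_a
   positions i with (v_i, w_i) = a, the letters of u' are distributed with multiplicities H(., a).
   Grouping the codewords u in C and v in D by L = l(u) and R = r(v; w) produces the weights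
   A_L^C B_R^(D,w). *)

lemma card_nth_eq_count: "card {i. i < length xs \<and> xs ! i = a} = count (mset xs) a"
proof -
  have "count (mset xs) a = length (filter ((=) a) xs)"
    by (induction xs) auto
  then show ?thesis
    by (simp add: length_filter_conv_card eq_commute)
qed

lemma ell_eq_count: "length u = n \<Longrightarrow> ell n a u = count (mset u) a"
  unfolding ell_def by (metis card_nth_eq_count)

lemma rr_eq_count: "length v = n \<Longrightarrow> length w = n \<Longrightarrow> rr n a v w = count (mset (zip v w)) a"
  unfolding rr_def card_nth_eq_count[symmetric] by (rule arg_cong[where f = card]) auto

lemma hh_eq_count:
  "length u = n \<Longrightarrow> length v = n \<Longrightarrow> length w = n \<Longrightarrow>
   hh n c u v w = count (mset (zip u (zip v w))) c"
  unfolding hh_def card_nth_eq_count[symmetric] by (rule arg_cong[where f = card]) auto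

lemma sum_count_Pair_left:
  fixes M :: "('b \<times> 'a::finite) multiset"
  shows "(\<Sum>a\<in>UNIV. count M (b, a)) = count (image_mset fst M) b"
proof -
  have "(\<Sum>a\<in>UNIV. count M (b, a)) = sum (count M) (Pair b ` UNIV)"
    by (simp add: sum.reindex inj_on_def)
  also have "\<dots> = sum (count M) (fst -` {b} \<inter> set_mset M)"
    by (rule sum.mono_neutral_cong) (auto simp: not_in_iff)
  finally show ?thesis
    by (simp add: count_image_mset)
qed

lemma sum_count_Pair_right:
  fixes M :: "('b::finite \<times> 'a) multiset"
  shows "(\<Sum>b\<in>UNIV. count M (b, a)) = count (image_mset snd M) a"
proof -
  have "(\<Sum>b\<in>UNIV. count M (b, a)) = sum (count M) ((\<lambda>b. (b, a)) ` UNIV)"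
    by (simp add: sum.reindex inj_on_def)
  also have "\<dots> = sum (count M) (snd -` {a} \<inter> set_mset M)"
    by (rule sum.mono_neutral_cong) (auto simp: not_in_iff)
  finally show ?thesis
    by (simp add: count_image_mset)
qed

lemma sum_count_mset_zip_left:
  fixes z :: "'a::finite list"
  shows "length u = length z \<Longrightarrow> (\<Sum>a\<in>UNIV. count (mset (zip u z)) (b, a)) = count (mset u) b"
  by (simp add: sum_count_Pair_left flip: mset_map)

lemma sum_count_mset_zip_right:
  fixes u :: "'b::finite list"
  shows "length u = length z \<Longrightarrow> (\<Sum>b\<in>UNIV. count (mset (zip u z)) (b, a)) = count (mset z) a"
  by (simp add: sum_count_Pair_right flip: mset_map)

lemma composition_count_mset: "composition (length xs) (count (mset (xs :: 'a::finite list)))"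
  by (simp add: composition_def count_mset sum_count_set)

lemma composition_le: "composition n f \<Longrightarrow> f c \<le> n"
  unfolding composition_def by (metis finite UNIV_I member_le_sum zero_le)

lemma finite_compositions: "finite {f :: 'a::finite \<Rightarrow> nat. composition n f}"
  by (rule finite_subset[of _ "PiE UNIV (\<lambda>_. {..n})"]) (auto simp: composition_le finite_PiE)

lemma finite_words: "finite (words n :: 'a::finite list set)"
  using finite_lists_length_eq[of "UNIV :: 'a set" n] by (simp add: words_def)

lemma composition_ell: "length u = n \<Longrightarrow> composition n (\<lambda>b. ell n b u)"
  using composition_count_mset[of u] by (simp add: ell_eq_count)

lemma composition_rr: "length v = n \<Longrightarrow> length w = n \<Longrightarrow> composition n (\<lambda>a. rr n a v w)"
  using composition_count_mset[of "zip v w"] by (simp add: rr_eq_count)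

definition joint_type_words :: "'a list \<Rightarrow> ('b \<times> 'a \<Rightarrow> nat) \<Rightarrow> 'b list set" where
  "joint_type_words z H = {u. length u = length z \<and> count (mset (zip u z)) = H}"

lemma finite_joint_type_words: "finite (joint_type_words z (H :: 'b::finite \<times> 'a \<Rightarrow> nat))"
  by (rule finite_subset[OF _ finite_lists_length_eq[of UNIV "length z"]])
     (auto simp: joint_type_words_def)

lemma count_add_mset_eq_iff:
  "count (add_mset x M) = f \<longleftrightarrow> 0 < f x \<and> count M = f(x := f x - 1)"
  by (auto simp: fun_eq_iff split: if_splits)

lemma Cons_in_joint_type_words_iff:
  "b # u \<in> joint_type_words (a # z) H \<longleftrightarrow>
     0 < H (b, a) \<and> u \<in> joint_type_words z (H((b, a) := H (b, a) - 1))"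
  by (auto simp: joint_type_words_def count_add_mset_eq_iff)

lemma joint_type_words_Cons:
  "joint_type_words (a # z) H =
     (\<Union>b\<in>{b. 0 < H (b, a)}. (#) b ` joint_type_words z (H((b, a) := H (b, a) - 1)))"
proof (intro equalityI subsetI)
  fix u assume u: "u \<in> joint_type_words (a # z) H"
  then obtain b u' where "u = b # u'"
    by (cases u) (auto simp: joint_type_words_def)
  with u show "u \<in> (\<Union>b\<in>{b. 0 < H (b, a)}. (#) b ` joint_type_words z (H((b, a) := H (b, a) - 1)))"
    by (auto simp: Cons_in_joint_type_words_iff)
qed (auto simp: Cons_in_joint_type_words_iff)

lemma prod_fact_decrement:
  fixes f :: "'a::finite \<Rightarrow> nat"
  assumes "0 < f c"
  shows "(\<Prod>x\<in>UNIV. fact (f x)) = f c * (\<Prod>x\<in>UNIV. fact ((f(c := f c - 1)) x))"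
proof -
  have "(\<Prod>x\<in>UNIV - {c}. fact ((f(c := f c - 1)) x)) = (\<Prod>x\<in>UNIV - {c}. fact (f x) :: nat)"
    by (intro prod.cong) auto
  then have "(\<Prod>x\<in>UNIV. fact ((f(c := f c - 1)) x)) = fact (f c - 1) * (\<Prod>x\<in>UNIV - {c}. fact (f x))"
    by (simp add: prod.remove[of UNIV c])
  moreover have "fact (f c) = f c * (fact (f c - 1) :: nat)"
    using assms by (simp add: fact_reduce)
  ultimately show ?thesis
    by (simp add: prod.remove[of UNIV c])
qed

lemma sum_Pair_fun_upd_decrement:
  fixes H :: "'b::finite \<times> 'a \<Rightarrow> nat"
  assumes "0 < H (b, a)"
  shows "(\<Sum>b'\<in>UNIV. (H((b, a) := H (b, a) - 1)) (b', a')) =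
    (\<Sum>b'\<in>UNIV. H (b', a')) - of_bool (a' = a)"
proof (cases "a' = a")
  case True
  have "(\<Sum>b'\<in>UNIV - {b}. (H((b, a) := H (b, a) - 1)) (b', a)) = (\<Sum>b'\<in>UNIV - {b}. H (b', a))"
    by (intro sum.cong) auto
  with assms True show ?thesis
    by (simp add: sum.remove[of UNIV b])
qed simp

lemma card_joint_type_words_mult_prod_fact:
  fixes H :: "'b::finite \<times> 'a::finite \<Rightarrow> nat"
  assumes "\<And>a. (\<Sum>b\<in>UNIV. H (b, a)) = count (mset z) a"
  shows "card (joint_type_words z H) * (\<Prod>c\<in>UNIV. fact (H c)) = (\<Prod>a\<in>UNIV. fact (count (mset z) a))"
  using assms
proof (induction z arbitrary: H)
  case Nil
  then have "H = (\<lambda>_. 0)" by (auto simp: fun_eq_iff)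
  then have "joint_type_words [] H = {[]}" by (auto simp: joint_type_words_def)
  with \<open>H = (\<lambda>_. 0)\<close> show ?case by simp
next
  case (Cons a z)
  define H' where "H' b = H((b, a) := H (b, a) - 1)" for b
  define B where "B = {b. 0 < H (b, a)}"
  have step: "card (joint_type_words z (H' b)) * (\<Prod>c\<in>UNIV. fact (H c)) =
      H (b, a) * (\<Prod>a\<in>UNIV. fact (count (mset z) a))" if "b \<in> B" for b
  proof -
    have "(\<Sum>b'\<in>UNIV. H' b (b', a')) = count (mset z) a'" for a'
      using sum_Pair_fun_upd_decrement[of H b a a'] Cons.prems[of a'] \<open>b \<in> B\<close>
      by (simp add: H'_def B_def)
    note Cons.IH[OF this]
    moreover have "(\<Prod>c\<in>UNIV. fact (H c)) = H (b, a) * (\<Prod>c\<in>UNIV. fact (H' b c))"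
      using prod_fact_decrement[of H "(b, a)"] \<open>b \<in> B\<close> by (simp add: H'_def B_def)
    ultimately show ?thesis
      by (metis mult.left_commute)
  qed
  have "card (joint_type_words (a # z) H) = (\<Sum>b\<in>B. card (joint_type_words z (H' b)))"
    unfolding joint_type_words_Cons H'_def[symmetric] B_def[symmetric]
    by (subst card_UN_disjoint) (auto simp: finite_joint_type_words card_image)
  then have "card (joint_type_words (a # z) H) * (\<Prod>c\<in>UNIV. fact (H c)) =
      (\<Sum>b\<in>B. H (b, a)) * (\<Prod>a\<in>UNIV. fact (count (mset z) a))"
    by (simp add: sum_distrib_right step)
  also have "(\<Sum>b\<in>B. H (b, a)) = (\<Sum>b\<in>UNIV. H (b, a))"
    by (rule sum.mono_neutral_left) (auto simp: B_def)
  also have "\<dots> = count (mset (a # z)) a"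
    by (rule Cons.prems)
  also have "\<dots> * (\<Prod>a\<in>UNIV. fact (count (mset z) a)) = (\<Prod>a'\<in>UNIV. fact (count (mset (a # z)) a'))"
  proof -
    have dec: "(count (mset (a # z)))(a := count (mset (a # z)) a - 1) = count (mset z)"
      by (auto simp: fun_eq_iff)
    from prod_fact_decrement[of "count (mset (a # z))" a, unfolded dec] show ?thesis
      by simp
  qed
  finally show ?case .
qed

lemma card_joint_type_words:
  fixes H :: "'b::finite \<times> 'a::finite \<Rightarrow> nat"
  assumes "\<And>a. (\<Sum>b\<in>UNIV. H (b, a)) = count (mset z) a"
  shows "real (card (joint_type_words z H)) =
    (\<Prod>a\<in>UNIV. multinom (count (mset z) a) (\<lambda>b. H (b, a)) UNIV)"
proof -
  have "(\<Prod>a\<in>UNIV. \<Prod>b\<in>UNIV. fact (H (b, a)) :: real) = (\<Prod>c\<in>UNIV. fact (H c))"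
    by (subst prod.swap) (simp add: prod.cartesian_product flip: UNIV_Times_UNIV)
  moreover have "(\<Prod>a\<in>UNIV. fact (count (mset z) a) :: real) =
      real (card (joint_type_words z H)) * (\<Prod>c\<in>UNIV. fact (H c))"
    using arg_cong[OF card_joint_type_words_mult_prod_fact[OF assms], of real] by simp
  ultimately show ?thesis
    by (simp add: multinom_def prod_dividef)
qed

definition joint_compositions ::
    "nat \<Rightarrow> ('b::finite \<Rightarrow> nat) \<Rightarrow> ('a::finite \<Rightarrow> nat) \<Rightarrow> ('b \<times> 'a \<Rightarrow> nat) set" where
  "joint_compositions n L R = {H. composition n H
     \<and> (\<forall>b. (\<Sum>a\<in>UNIV. H (b, a)) = L b) \<and> (\<forall>a. (\<Sum>b\<in>UNIV. H (b, a)) = R a)}"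

lemma finite_joint_compositions: "finite (joint_compositions n L R)"
  unfolding joint_compositions_def by (rule finite_subset[OF _ finite_compositions]) auto

lemma count_mset_zip_in_joint_compositions:
  fixes u :: "'b::finite list" and z :: "'a::finite list"
  assumes "length u = length z"
  shows "count (mset (zip u z)) \<in> joint_compositions (length z) (count (mset u)) (count (mset z))"
  using assms composition_count_mset[of "zip u z"]
  by (simp add: joint_compositions_def sum_count_mset_zip_left sum_count_mset_zip_right)

lemma joint_type_words_eq_filter_permutations_of_multiset:
  fixes u :: "'b::finite list" and z :: "'a::finite list"
  assumes "length u = length z" and "H \<in> joint_compositions n (count (mset u)) R"
  shows "joint_type_words z H =
    {u' \<in> permutations_of_multiset (mset u). count (mset (zip u' z)) = H}"
proof (intro equalityI subsetI)
  fix u' assume u': "u' \<in> joint_type_words z H"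
  have "count (mset u') b = count (mset u) b" for b
  proof -
    have "count (mset u') b = (\<Sum>a\<in>UNIV. count (mset (zip u' z)) (b, a))"
      using u' sum_count_mset_zip_left[of u' z b] by (simp add: joint_type_words_def)
    also have "\<dots> = count (mset u) b"
      using u' assms(2) by (simp add: joint_type_words_def joint_compositions_def)
    finally show ?thesis .
  qed
  then have "u' \<in> permutations_of_multiset (mset u)"
    by (intro permutations_of_multisetI multiset_eqI)
  with u' show "u' \<in> {u' \<in> permutations_of_multiset (mset u). count (mset (zip u' z)) = H}"
    by (simp add: joint_type_words_def)
next
  fix u' assume "u' \<in> {u' \<in> permutations_of_multiset (mset u). count (mset (zip u' z)) = H}"
  then have "mset u' = mset u" and "count (mset (zip u' z)) = H"
    by (simp_all add: permutations_of_multisetD)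
  moreover from \<open>mset u' = mset u\<close> assms(1) have "length u' = length z"
    by (metis mset_eq_length)
  ultimately show "u' \<in> joint_type_words z H"
    by (simp add: joint_type_words_def)
qed

lemma sum_permutations_of_multiset_by_joint_type:
  fixes u :: "'b::finite list" and z :: "'a::finite list"
  assumes "length u = length z"
  shows "(\<Sum>u'\<in>permutations_of_multiset (mset u). F (count (mset (zip u' z)))) =
    (\<Sum>H\<in>joint_compositions (length z) (count (mset u)) (count (mset z)).
       (\<Prod>a\<in>UNIV. multinom (count (mset z) a) (\<lambda>b. H (b, a)) UNIV) * F H)"
proof -
  let ?I = "permutations_of_multiset (mset u)"
  let ?J = "joint_compositions (length z) (count (mset u)) (count (mset z))"
  have "count (mset (zip u' z)) \<in> ?J" if "u' \<in> ?I" for u'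
  proof -
    have "mset u' = mset u"
      using that by (rule permutations_of_multisetD)
    then have "length u' = length z"
      using assms by (metis mset_eq_length)
    with \<open>mset u' = mset u\<close> show ?thesis
      by (metis count_mset_zip_in_joint_compositions)
  qed
  then have "(\<Sum>u'\<in>?I. F (count (mset (zip u' z)))) =
      (\<Sum>H\<in>?J. \<Sum>u'\<in>{u' \<in> ?I. count (mset (zip u' z)) = H}. F (count (mset (zip u' z))))"
    by (intro sum.group[symmetric] finite_joint_compositions) auto
  also have "\<dots> = (\<Sum>H\<in>?J. real (card (joint_type_words z H)) * F H)"
  proof (intro sum.cong refl)
    fix H assume "H \<in> ?J"
    with assms have "joint_type_words z H = {u' \<in> ?I. count (mset (zip u' z)) = H}"
      by (rule joint_type_words_eq_filter_permutations_of_multiset)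
    then show "(\<Sum>u'\<in>{u' \<in> ?I. count (mset (zip u' z)) = H}. F (count (mset (zip u' z)))) =
        real (card (joint_type_words z H)) * F H"
      by simp
  qed
  also have "\<dots> = (\<Sum>H\<in>?J. (\<Prod>a\<in>UNIV. multinom (count (mset z) a) (\<lambda>b. H (b, a)) UNIV) * F H)"
    by (intro sum.cong refl) (simp add: card_joint_type_words joint_compositions_def)
  finally show ?thesis .
qed

lemma card_permutations_of_multiset_mset:
  fixes u :: "'a::finite list"
  shows "real (card (permutations_of_multiset (mset u))) =
    multinom (length u) (count (mset u)) UNIV"
proof -
  have "(\<Prod>x\<in>set_mset (mset u). fact (count (mset u) x)) = (\<Prod>x\<in>UNIV. fact (count (mset u) x) :: nat)"
    by (rule prod.mono_neutral_left) (auto simp: count_mset_0_iff[THEN iffD2])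
  with card_permutations_of_multiset_aux[of "mset u"]
  have "card (permutations_of_multiset (mset u)) * (\<Prod>x\<in>UNIV. fact (count (mset u) x)) =
      fact (length u)"
    by simp
  then have "real (card (permutations_of_multiset (mset u)) * (\<Prod>x\<in>UNIV. fact (count (mset u) x))) =
      fact (length u)"
    by (simp only: of_nat_fact)
  then show ?thesis
    by (simp only: multinom_def of_nat_mult of_nat_prod of_nat_fact eq_divide_eq) simp
qed

lemma permute_list_in_permutations_of_multiset:
  assumes "\<sigma> permutes {..<size A}" and "xs \<in> permutations_of_multiset A"
  shows "permute_list \<sigma> xs \<in> permutations_of_multiset A"
proof -
  have "length xs = size A"
    using assms(2) by (metis permutations_of_multisetD size_mset)
  with assms show ?thesis
    by (metis mset_permute_list permutations_of_multisetD permutations_of_multisetI)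
qed

lemma bij_betw_permute_list_permutations_of_multiset:
  assumes "\<sigma> permutes {..<size A}"
  shows "bij_betw (permute_list \<sigma>) (permutations_of_multiset A) (permutations_of_multiset A)"
proof (rule bij_betw_byWitness[where f' = "permute_list (inv \<sigma>)"])
  have inv: "inv \<sigma> permutes {..<size A}"
    using assms by (rule permutes_inv)
  have length: "length xs = size A" if "xs \<in> permutations_of_multiset A" for xs
    using that by (metis permutations_of_multisetD size_mset)
  show "\<forall>xs\<in>permutations_of_multiset A. permute_list (inv \<sigma>) (permute_list \<sigma> xs) = xs"
    using assms inv by (auto simp: length permutes_inv_o permute_list_compose[symmetric])
  show "\<forall>xs\<in>permutations_of_multiset A. permute_list \<sigma> (permute_list (inv \<sigma>) xs) = xs"
    using assms inv by (auto simp: length permutes_inv_o permute_list_compose[symmetric])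
  show "permute_list \<sigma> ` permutations_of_multiset A \<subseteq> permutations_of_multiset A"
    using assms by (auto intro: permute_list_in_permutations_of_multiset)
  show "permute_list (inv \<sigma>) ` permutations_of_multiset A \<subseteq> permutations_of_multiset A"
    using inv by (auto intro: permute_list_in_permutations_of_multiset)
qed

lemma sum_permutes_permute_list_mset_cong:
  assumes "mset u' = mset u"
  shows "(\<Sum>\<sigma> | \<sigma> permutes {..<length u}. G (permute_list \<sigma> u')) =
         (\<Sum>\<sigma> | \<sigma> permutes {..<length u}. G (permute_list \<sigma> u))"
proof -
  obtain \<sigma>\<^sub>0 where \<sigma>\<^sub>0: "\<sigma>\<^sub>0 permutes {..<length u}" "permute_list \<sigma>\<^sub>0 u = u'"
    using mset_eq_permutation[OF assms] .
  have "(\<Sum>\<sigma> | \<sigma> permutes {..<length u}. G (permute_list \<sigma> u')) =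
        (\<Sum>\<sigma> | \<sigma> permutes {..<length u}. G (permute_list (\<sigma>\<^sub>0 \<circ> \<sigma>) u))"
    using \<sigma>\<^sub>0 by (intro sum.cong) (auto simp: permute_list_compose)
  also have "\<dots> = (\<Sum>\<sigma> | \<sigma> permutes {..<length u}. G (permute_list \<sigma> u))"
    using setum_permutations_compose_left[OF \<sigma>\<^sub>0(1), of "\<lambda>\<sigma>. G (permute_list \<sigma> u)"] by simp
  finally show ?thesis .
qed

lemma mean_permute_list_eq_mean_permutations_of_multiset:
  fixes G :: "'a list \<Rightarrow> real"
  shows "(\<Sum>\<sigma> | \<sigma> permutes {..<length u}. G (permute_list \<sigma> u)) / fact (length u) =
    (\<Sum>u'\<in>permutations_of_multiset (mset u). G u') / card (permutations_of_multiset (mset u))"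
proof -
  let ?I = "permutations_of_multiset (mset u)" and ?P = "{\<sigma>. \<sigma> permutes {..<length u}}"
  \<comment> \<open>Double counting of the pairs \<open>(\<sigma>, u')\<close>: every rearrangement \<open>u'\<close> of \<open>u\<close> sees the same
    sum over \<open>?P\<close>, and every \<open>\<sigma>\<close> permutes \<open>?I\<close>.\<close>
  have "(\<Sum>\<sigma>\<in>?P. G (permute_list \<sigma> u')) = (\<Sum>\<sigma>\<in>?P. G (permute_list \<sigma> u))" if "u' \<in> ?I" for u'
    using that by (intro sum_permutes_permute_list_mset_cong permutations_of_multisetD)
  then have "real (card ?I) * (\<Sum>\<sigma>\<in>?P. G (permute_list \<sigma> u)) =
      (\<Sum>u'\<in>?I. \<Sum>\<sigma>\<in>?P. G (permute_list \<sigma> u'))"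
    by simp
  also have "\<dots> = (\<Sum>\<sigma>\<in>?P. \<Sum>u'\<in>?I. G (permute_list \<sigma> u'))"
    by (rule sum.swap)
  also have "\<dots> = (\<Sum>\<sigma>\<in>?P. \<Sum>u'\<in>?I. G u')"
    by (intro sum.cong refl sum.reindex_bij_betw bij_betw_permute_list_permutations_of_multiset)
       simp
  also have "\<dots> = fact (length u) * (\<Sum>u'\<in>?I. G u')"
    by (simp add: card_permutations)
  finally have "real (card ?I) * (\<Sum>\<sigma>\<in>?P. G (permute_list \<sigma> u)) = fact (length u) * (\<Sum>u'\<in>?I. G u')" .
  moreover have "card ?I \<noteq> 0"
    by (simp add: card_gt_0_iff[symmetric])
  ultimately show ?thesis
    by (simp add: field_simps)
qed

lemma inj_on_permute_list:
  assumes "\<sigma> permutes {..<n}"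
  shows "inj_on (permute_list \<sigma>) {xs. length xs = n}"
  using assms
  by (intro inj_on_inverseI[where g = "permute_list (inv \<sigma>)"])
     (auto simp: permute_list_compose[symmetric] permutes_inv permutes_inv_o)

lemma permute_word_eq_permute_list: "length u = n \<Longrightarrow> permute_word n \<sigma> u = permute_list \<sigma> u"
  by (simp add: permute_word_def permute_list_def)

lemma Jac_permute_word:
  assumes "\<sigma> permutes {..<n}" and "C \<subseteq> words n"
  shows "Jac n (permute_word n \<sigma> ` C) D w x =
    (\<Sum>u\<in>C. \<Sum>v\<in>D. \<Prod>c\<in>UNIV. x c ^ hh n c (permute_list \<sigma> u) v w)"
proof -
  have permute_word: "permute_word n \<sigma> u = permute_list \<sigma> u" if "u \<in> C" for u
    using that assms(2) by (auto simp: words_def permute_word_eq_permute_list)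
  have "inj_on (permute_list \<sigma>) C"
    using assms(2)
    by (auto simp: words_def intro: inj_on_subset[OF inj_on_permute_list[OF assms(1)]])
  then show ?thesis
    by (simp add: Jac_def sum.reindex permute_word)
qed

lemma Jac_av_eq_sum_mean_permutations_of_multiset:
  assumes "C \<subseteq> words n"
  shows "Jac_av n C D w x = (\<Sum>u\<in>C. \<Sum>v\<in>D.
    (\<Sum>u'\<in>permutations_of_multiset (mset u). \<Prod>c\<in>UNIV. x c ^ hh n c u' v w)
      / card (permutations_of_multiset (mset u)))"
proof -
  let ?G = "\<lambda>v u'. \<Prod>c\<in>UNIV. x c ^ hh n c u' v w"
  have "Jac_av n C D w x = (\<Sum>u\<in>C. \<Sum>v\<in>D. (\<Sum>\<sigma> | \<sigma> permutes {..<n}. ?G v (permute_list \<sigma> u)) / fact n)"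
    using assms
    by (simp add: Jac_av_def Jac_permute_word sum_divide_distrib
        sum.swap[of _ "{\<sigma>. \<sigma> permutes {..<n}}"])
  also have "\<dots> = (\<Sum>u\<in>C. \<Sum>v\<in>D. (\<Sum>u'\<in>permutations_of_multiset (mset u). ?G v u')
      / card (permutations_of_multiset (mset u)))"
    using assms
    by (intro sum.cong refl)
       (auto simp: words_def simp flip: mean_permute_list_eq_mean_permutations_of_multiset)
  finally show ?thesis .
qed

lemma mean_monomial_over_permutations_of_multiset:
  fixes u v w :: "'r::finite list"
  assumes "length u = n" and "length v = n" and "length w = n"
  shows "(\<Sum>u'\<in>permutations_of_multiset (mset u). \<Prod>c\<in>UNIV. x c ^ hh n c u' v w)
      / card (permutations_of_multiset (mset u)) =
    (\<Sum>H\<in>joint_compositions n (\<lambda>b. ell n b u) (\<lambda>a. rr n a v w).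
       (\<Prod>a\<in>UNIV. multinom (rr n a v w) (\<lambda>b. H (b, a)) UNIV) / multinom n (\<lambda>b. ell n b u) UNIV
       * (\<Prod>c\<in>UNIV. x c ^ H c))"
proof -
  let ?I = "permutations_of_multiset (mset u)" and ?z = "zip v w"
  have "(\<Sum>u'\<in>?I. \<Prod>c\<in>UNIV. x c ^ hh n c u' v w) =
      (\<Sum>u'\<in>?I. \<Prod>c\<in>UNIV. x c ^ count (mset (zip u' ?z)) c)"
    using assms by (intro sum.cong refl)
      (auto simp: hh_eq_count dest!: permutations_of_multisetD mset_eq_length)
  also have "\<dots> = (\<Sum>H\<in>joint_compositions n (count (mset u)) (count (mset ?z)).
       (\<Prod>a\<in>UNIV. multinom (count (mset ?z) a) (\<lambda>b. H (b, a)) UNIV) * (\<Prod>c\<in>UNIV. x c ^ H c))"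
    using assms sum_permutations_of_multiset_by_joint_type[of u ?z "\<lambda>H. \<Prod>c\<in>UNIV. x c ^ H c"] by simp
  finally show ?thesis
    using assms
    by (simp add: card_permutations_of_multiset_mset ell_eq_count rr_eq_count sum_divide_distrib)
qed

lemma Jac_av_eq_sum_joint_compositions:
  assumes "C \<subseteq> words n" and "D \<subseteq> words n" and "length w = n"
  shows "Jac_av n C D w x = (\<Sum>u\<in>C. \<Sum>v\<in>D.
    \<Sum>H\<in>joint_compositions n (\<lambda>b. ell n b u) (\<lambda>a. rr n a v w).
       (\<Prod>a\<in>UNIV. multinom (rr n a v w) (\<lambda>b. H (b, a)) UNIV) / multinom n (\<lambda>b. ell n b u) UNIV
       * (\<Prod>c\<in>UNIV. x c ^ H c))"
  unfolding Jac_av_eq_sum_mean_permutations_of_multiset[OF assms(1)]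
  using assms
  by (intro sum.cong refl mean_monomial_over_permutations_of_multiset) (auto simp: words_def)

lemma real_card_filter_eq_sum: "finite A \<Longrightarrow> real (card {x \<in> A. P x}) = (\<Sum>x\<in>A. if P x then 1 else 0)"
  by (simp add: sum.inter_filter[symmetric])

lemma sum_triples_with_prefix:
  assumes "finite T"
  shows "(\<Sum>t\<in>T. if fst t = a \<and> fst (snd t) = b then \<phi> t else 0) =
    (\<Sum>H\<in>{H. (a, b, H) \<in> T}. \<phi> (a, b, H))"
proof -
  have "(\<Sum>t\<in>T. if fst t = a \<and> fst (snd t) = b then \<phi> t else 0) =
      (\<Sum>t\<in>{t \<in> T. fst t = a \<and> fst (snd t) = b}. \<phi> t)"
    using assms by (simp add: sum.inter_filter)
  also have "{t \<in> T. fst t = a \<and> fst (snd t) = b} = (\<lambda>H. (a, b, H)) ` {H. (a, b, H) \<in> T}"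
  proof (intro equalityI subsetI)
    fix t assume "t \<in> {t \<in> T. fst t = a \<and> fst (snd t) = b}"
    then show "t \<in> (\<lambda>H. (a, b, H)) ` {H. (a, b, H) \<in> T}"
      by (cases t) auto
  qed auto
  also have "(\<Sum>t\<in>\<dots>. \<phi> t) = (\<Sum>H\<in>{H. (a, b, H) \<in> T}. \<phi> (a, b, H))"
    by (simp add: sum.reindex inj_on_def)
  finally show ?thesis .
qed

lemma sum_triples_weighted_by_card_fibres:
  fixes f :: "'a \<Rightarrow> 'k" and g :: "'b \<Rightarrow> 'l" and K :: "'k \<Rightarrow> 'l \<Rightarrow> 'h \<Rightarrow> real"
  assumes "finite C" and "finite D" and "finite T"
  shows "(\<Sum>(L, R, H)\<in>T. real (card {u\<in>C. f u = L}) * real (card {v\<in>D. g v = R}) * K L R H) =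
    (\<Sum>u\<in>C. \<Sum>v\<in>D. \<Sum>H\<in>{H. (f u, g v, H) \<in> T}. K (f u) (g v) H)"
proof -
  let ?K = "\<lambda>t. K (fst t) (fst (snd t)) (snd (snd t))"
  have fibres: "real (card {u\<in>C. f u = L}) * real (card {v\<in>D. g v = R}) * k =
      (\<Sum>u\<in>C. \<Sum>v\<in>D. if L = f u \<and> R = g v then k else 0)" for L R k
    using assms(1,2)
    by (simp add: real_card_filter_eq_sum sum_product sum_distrib_right)
       (intro sum.cong refl; auto simp: sum_distrib_right intro!: sum.cong)
  have "(\<Sum>(L, R, H)\<in>T. real (card {u\<in>C. f u = L}) * real (card {v\<in>D. g v = R}) * K L R H) =
      (\<Sum>t\<in>T. \<Sum>u\<in>C. \<Sum>v\<in>D. if fst t = f u \<and> fst (snd t) = g v then ?K t else 0)"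
    unfolding split_def fibres ..
  also have "\<dots> = (\<Sum>u\<in>C. \<Sum>v\<in>D. \<Sum>t\<in>T. if fst t = f u \<and> fst (snd t) = g v then ?K t else 0)"
    by (subst sum.swap) (rule sum.cong[OF refl], rule sum.swap)
  also have "\<dots> = (\<Sum>u\<in>C. \<Sum>v\<in>D. \<Sum>H\<in>{H. (f u, g v, H) \<in> T}. K (f u) (g v) H)"
    using assms(3) by (simp add: sum_triples_with_prefix)
  finally show ?thesis .
qed

theorem theorem4p5:
  fixes C D :: "'r::{finite,comm_ring_1} list set"
    and w :: "'r list" and n :: nat
    and x :: "'r \<times> 'r \<times> 'r \<Rightarrow> real"
  assumes "Fq_or_Zk TYPE('r)"
    and "linear_code n C" and "linear_code n D"
    and "w \<in> words n"
  shows "Jac_av n C D w x =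
    (\<Sum>(L, R, H) \<in> {(L, R, H). composition n L \<and> composition n R \<and> composition n H
        \<and> (\<forall>b. L b = (\<Sum>a\<in>UNIV. H (b, fst a, snd a)))
        \<and> (\<forall>a1 a2. R (a1, a2) = (\<Sum>b\<in>UNIV. H (b, a1, a2)))}.
      real (A_count n C L) * real (B_count n D w R)
      * (\<Prod>a\<in>UNIV. multinom (R a) (\<lambda>b. H (b, fst a, snd a)) UNIV)
      / multinom n L UNIV
      * (\<Prod>c\<in>UNIV. x c ^ H c))"
  (is "_ = (\<Sum>(L, R, H) \<in> ?T. _)")
proof -
  \<comment> \<open>Only \<open>C, D \<subseteq> words n\<close> is used: the identity holds for arbitrary sets of words over
    any finite alphabet, so neither the ring structure nor linearity matters.\<close>
  have C: "C \<subseteq> words n" and D: "D \<subseteq> words n" and w: "length w = n"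
    using assms(2-4) by (simp_all add: linear_code_def words_def)
  have finite: "finite C" "finite D" "finite ?T"
    using C D finite_words
    by (auto intro: finite_subset finite_subset[OF _ finite_cartesian_product[OF finite_compositions
          finite_cartesian_product[OF finite_compositions finite_compositions]]])
  define l where "l u = (\<lambda>b. ell n b u)" for u :: "'r list"
  define r where "r v = (\<lambda>a. rr n a v w)" for v :: "'r list"
  define K where "K L R H = (\<Prod>a\<in>UNIV. multinom (R a) (\<lambda>b. H (b, fst a, snd a)) UNIV)
    / multinom n L UNIV * (\<Prod>c\<in>UNIV. x c ^ H c)"
    for L :: "'r \<Rightarrow> nat" and R :: "'r \<times> 'r \<Rightarrow> nat" and H :: "'r \<times> 'r \<times> 'r \<Rightarrow> nat"
  have "Jac_av n C D w x = (\<Sum>u\<in>C. \<Sum>v\<in>D. \<Sum>H\<in>{H. (l u, r v, H) \<in> ?T}. K (l u) (r v) H)"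
    unfolding Jac_av_eq_sum_joint_compositions[OF C D w]
    using C D w by (intro sum.cong refl)
      (auto simp: joint_compositions_def words_def l_def r_def K_def composition_ell composition_rr)
  also have "\<dots> = (\<Sum>(L, R, H)\<in>?T. real (card {u\<in>C. l u = L}) * real (card {v\<in>D. r v = R}) * K L R H)"
    using finite by (rule sum_triples_weighted_by_card_fibres[symmetric])
  finally show ?thesis
    by (simp add: A_count_def B_count_def K_def l_def r_def fun_eq_iff mult.assoc)
qed

end
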